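(* Let $p\ge1$ and $0<\nu\le1/2$. Then $$\sup_{0<y<(2+\nu/p^2)\,\omega_{p,\nu}}\left|\frac{1-y^{-1}P_{p,\nu}(y)}{P_{p,\nu}(y)}\right|\le\frac{\nu+1}{2\nu}.$$
   Context: $T_p$ denotes the Chebyshev polynomial of the first kind of degree $p$. $\delta_{p,\nu}:=1+\nu/p^2$, $\omega_{p,\nu}:=2T_p'(\delta_{p,\nu})/T_p(\delta_{p,\nu})$, and $P_{p,\nu}(x):=2\big(1-T_p(\delta_{p,\nu}-x/\omega_{p,\nu})/T_p(\delta_{p,\nu})\big)$. *)

theory Defs
  imports "HOL-Analysis.Analysis"
begin

fun cheb_T :: "nat \<Rightarrow> real \<Rightarrow> real" where
  "cheb_T 0 x = 1"
| "cheb_T (Suc 0) x = x"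
| "cheb_T (Suc (Suc n)) x = 2 * x * cheb_T (Suc n) x - cheb_T n x"

definition delta_pn :: "nat \<Rightarrow> real \<Rightarrow> real" where
  "delta_pn p \<nu> = 1 + \<nu> / (real p)^2"

definition omega_pn :: "nat \<Rightarrow> real \<Rightarrow> real" where
  "omega_pn p \<nu> = 2 * deriv (cheb_T p) (delta_pn p \<nu>) / cheb_T p (delta_pn p \<nu>)"

definition P_pn :: "nat \<Rightarrow> real \<Rightarrow> real \<Rightarrow> real" where
  "P_pn p \<nu> x = 2 * (1 - cheb_T p (delta_pn p \<nu> - x / omega_pn p \<nu>) / cheb_T p (delta_pn p \<nu>))"

end

theory Submission
  imports Defs
begin

(*
  Write A = T_p(\<delta>), B = T_p'(\<delta>) = p U_(p-1)(\<delta>), s = y/\<omega> and f = A - T_p(\<delta> - s).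
  Then y = 2sB/A and P(y) = 2f/A, so the quantity to bound is A (sB - f) / (2 f sB), and the
  mean value theorem with |U_(p-1)| \<le> U_(p-1)(\<delta>) on [-1, \<delta>] gives f \<le> sB.
  If \<delta> - s < 1 then |T_p(\<delta> - s)| \<le> 1, so f \<ge> A - 1 \<ge> \<nu> and the quantity is at most
  A / (2(A - 1)) \<le> (\<nu> + 1)/(2\<nu>).  If \<delta> - s \<ge> 1 then T_p' \<ge> p^2 gives f \<ge> s p^2, while
  U' \<le> p^2 U / 2 on [1, \<infinity>) gives the second-order estimate sB - f \<le> s^2 p^2 B / 2; together
  they bound the quantity by A/4.  The same estimates at \<delta> = 1 + \<nu>/p^2 give 1 + \<nu> \<le> A \<le> 5/3.
*)

fun cheb_U :: "nat \<Rightarrow> real \<Rightarrow> real" where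
  "cheb_U 0 x = 1"
| "cheb_U (Suc 0) x = 2 * x"
| "cheb_U (Suc (Suc n)) x = 2 * x * cheb_U (Suc n) x - cheb_U n x"

(* The derivative of cheb_U; the recurrence comes from U_(n+2) = U_n + 2 T_(n+2)
   and T_(n+2)' = (n+2) U_(n+1). *)
fun cheb_dU :: "nat \<Rightarrow> real \<Rightarrow> real" where
  "cheb_dU 0 x = 0"
| "cheb_dU (Suc 0) x = 2"
| "cheb_dU (Suc (Suc n)) x = cheb_dU n x + 2 * real (Suc (Suc n)) * cheb_U (Suc n) x"

lemma cheb_U_Suc_eq: "cheb_U (Suc n) x = x * cheb_U n x + cheb_T (Suc n) x"
  by (induction n rule: induct_nat_012) (simp_all add: algebra_simps, algebra)

lemma cheb_T_Suc_Suc_eq: "cheb_T (Suc (Suc n)) x = x * cheb_U (Suc n) x - cheb_U n x"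
  using cheb_U_Suc_eq[of "Suc n" x] by (simp add: algebra_simps)

lemma cheb_U_Suc_Suc_eq: "cheb_U (Suc (Suc n)) x = cheb_U n x + 2 * cheb_T (Suc (Suc n)) x"
  by (simp only: cheb_T_Suc_Suc_eq cheb_U.simps(3)) (simp add: algebra_simps)

lemma has_real_derivative_cheb_T:
  "(cheb_T (Suc n) has_real_derivative real (Suc n) * cheb_U n x) (at x)"
proof (induction n rule: induct_nat_012)
  case 0
  have "cheb_T (Suc 0) = (\<lambda>x. x)" by auto
  then show ?case by simp
next
  case 1
  have "cheb_T (Suc (Suc 0)) = (\<lambda>x. 2 * x * x - 1)" by auto
  then show ?case by (auto intro!: derivative_eq_intros)
next
  case (ge2 n)
  have "cheb_T (Suc (Suc (Suc n))) = (\<lambda>x. 2 * x * cheb_T (Suc (Suc n)) x - cheb_T (Suc n) x)"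
    by auto
  moreover have "real (Suc (Suc (Suc n))) * cheb_U (Suc (Suc n)) x
      = 2 * cheb_T (Suc (Suc n)) x + 2 * x * (real (Suc (Suc n)) * cheb_U (Suc n) x)
        - real (Suc n) * cheb_U n x"
    by (simp only: cheb_T_Suc_Suc_eq cheb_U.simps(3)) (simp add: algebra_simps)
  ultimately show ?case
    by (auto intro!: derivative_eq_intros ge2 simp del: cheb_T.simps)
qed

lemma has_real_derivative_cheb_U: "(cheb_U n has_real_derivative cheb_dU n x) (at x)"
proof (induction n rule: induct_nat_012)
  case 0
  then show ?case by simp
next
  case 1
  have "cheb_U (Suc 0) = (\<lambda>x. 2 * x)" by auto
  then show ?case by (auto intro!: derivative_eq_intros)
next
  case (ge2 n)
  have "cheb_U (Suc (Suc n)) = (\<lambda>x. cheb_U n x + 2 * cheb_T (Suc (Suc n)) x)"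
    by (auto simp only: cheb_U_Suc_Suc_eq)
  then show ?case
    by (auto intro!: derivative_eq_intros ge2 has_real_derivative_cheb_T
        simp del: cheb_T.simps cheb_U.simps)
qed

lemma cheb_T_at_one: "cheb_T n 1 = 1"
  by (induction n rule: induct_nat_012) auto

lemma cheb_U_at_one: "cheb_U n 1 = real n + 1"
  by (induction n rule: induct_nat_012) auto

lemma cheb_T_cos: "cheb_T n (cos t) = cos (real n * t)"
proof (induction n rule: induct_nat_012)
  case (ge2 n)
  have "cos (real (Suc (Suc n)) * t) + cos (real n * t)
      = cos (real (Suc n) * t + t) + cos (real (Suc n) * t - t)"
    by (simp add: algebra_simps)
  also have "\<dots> = 2 * cos t * cos (real (Suc n) * t)"
    by (simp add: cos_add cos_diff)
  finally show ?case using ge2 by simp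
qed auto

lemma cheb_T_abs_le_one: "\<bar>x\<bar> \<le> 1 \<Longrightarrow> \<bar>cheb_T n x\<bar> \<le> 1"
  using cheb_T_cos[of n "arccos x"] by (simp add: cos_arccos_abs)

lemma cheb_U_abs_le: "\<bar>x\<bar> \<le> 1 \<Longrightarrow> \<bar>cheb_U n x\<bar> \<le> real n + 1"
proof (induction n)
  case (Suc n)
  have "\<bar>x * cheb_U n x\<bar> \<le> real n + 1"
    using Suc mult_mono[of "\<bar>x\<bar>" 1 "\<bar>cheb_U n x\<bar>" "real n + 1"] by (simp add: abs_mult)
  then show ?case
    using cheb_U_Suc_eq[of n x] cheb_T_abs_le_one[OF Suc.prems, of "Suc n"] by simp
qed simp

lemma cheb_U_ge_one_and_le_Suc: "1 \<le> x \<Longrightarrow> 1 \<le> cheb_U n x \<and> cheb_U n x \<le> cheb_U (Suc n) x"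
proof (induction n)
  case (Suc n)
  then have IH: "1 \<le> cheb_U n x" "cheb_U n x \<le> cheb_U (Suc n) x" by auto
  with Suc.prems have "2 * cheb_U (Suc n) x \<le> 2 * x * cheb_U (Suc n) x" by simp
  with IH show ?case unfolding cheb_U.simps(3) by (intro conjI) linarith+
qed simp

lemma cheb_U_ge_one: "1 \<le> x \<Longrightarrow> 1 \<le> cheb_U n x"
  using cheb_U_ge_one_and_le_Suc by blast

lemma cheb_U_le_Suc: "1 \<le> x \<Longrightarrow> cheb_U n x \<le> cheb_U (Suc n) x"
  using cheb_U_ge_one_and_le_Suc by blast

lemma cheb_dU_nonneg: "1 \<le> x \<Longrightarrow> 0 \<le> cheb_dU n x"
proof (induction n rule: induct_nat_012)
  case (ge2 n)
  then show ?case using cheb_U_ge_one[OF ge2(3), of "Suc n"] by simp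
qed auto

lemma cheb_dU_le: "1 \<le> x \<Longrightarrow> 2 * cheb_dU n x \<le> real n * (real n + 2) * cheb_U n x"
proof (induction n rule: induct_nat_012)
  case (ge2 n)
  have U: "cheb_U n x \<le> cheb_U (Suc (Suc n)) x" "cheb_U (Suc n) x \<le> cheb_U (Suc (Suc n)) x"
    using cheb_U_le_Suc[OF ge2(3)] by (meson order_trans)+
  have "2 * cheb_dU (Suc (Suc n)) x = 2 * cheb_dU n x + 4 * (real n + 2) * cheb_U (Suc n) x"
    by (simp add: algebra_simps)
  also have "\<dots> \<le> real n * (real n + 2) * cheb_U n x + 4 * (real n + 2) * cheb_U (Suc n) x"
    using ge2 by simp
  also have "\<dots> \<le> (real n * (real n + 2) + 4 * (real n + 2)) * cheb_U (Suc (Suc n)) x"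
    using U by (simp add: distrib_right add_mono mult_left_mono)
  finally show ?case by (simp add: algebra_simps)
qed auto

lemma cheb_U_mean_value:
  assumes "a \<le> b"
  obtains z where "a \<le> z" "z \<le> b" "cheb_U n b - cheb_U n a = (b - a) * cheb_dU n z"
proof (cases "a = b")
  case False
  with assms have "a < b" by simp
  then obtain z where "a < z" "z < b" "cheb_U n b - cheb_U n a = (b - a) * cheb_dU n z"
    using MVT2[OF _ has_real_derivative_cheb_U[of n]] by blast
  then show ?thesis by (intro that[of z]) auto
qed (use that in simp)

lemma cheb_U_mono:
  assumes "1 \<le> a" "a \<le> b" shows "cheb_U n a \<le> cheb_U n b"
proof -
  obtain z where "a \<le> z" "cheb_U n b - cheb_U n a = (b - a) * cheb_dU n z"
    using cheb_U_mean_value assms(2) by blast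
  moreover have "0 \<le> (b - a) * cheb_dU n z"
    using cheb_dU_nonneg[of z n] assms \<open>a \<le> z\<close> by simp
  ultimately show ?thesis by linarith
qed

lemma cheb_U_abs_le_cheb_U:
  assumes "-1 \<le> x" "x \<le> d" "1 \<le> d" shows "\<bar>cheb_U n x\<bar> \<le> cheb_U n d"
proof (cases "1 \<le> x")
  case True
  then show ?thesis using assms cheb_U_mono[of x d n] cheb_U_ge_one[of x n] by simp
next
  case False
  with assms have "\<bar>x\<bar> \<le> 1" by linarith
  then show ?thesis
    using assms cheb_U_abs_le[of x n] cheb_U_mono[of 1 d n] cheb_U_at_one[of n] by simp
qed

lemma cheb_U_diff_le:
  assumes "1 \<le> a" "a \<le> b"
  shows "cheb_U n b - cheb_U n a \<le> (b - a) * ((real (Suc n))^2 * cheb_U n b / 2)"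
proof -
  obtain z where z: "a \<le> z" "z \<le> b" "cheb_U n b - cheb_U n a = (b - a) * cheb_dU n z"
    using cheb_U_mean_value assms(2) by blast
  have "2 * cheb_dU n z \<le> real n * (real n + 2) * cheb_U n z"
    using cheb_dU_le z assms by simp
  also have "\<dots> \<le> (real (Suc n))^2 * cheb_U n z"
    using cheb_U_ge_one[of z n] z assms
    by (intro mult_right_mono) (auto simp: power2_eq_square algebra_simps)
  also have "\<dots> \<le> (real (Suc n))^2 * cheb_U n b"
    using cheb_U_mono[of z b n] z assms by (intro mult_left_mono) auto
  finally have "cheb_dU n z \<le> (real (Suc n))^2 * cheb_U n b / 2" by simp
  then have "(b - a) * cheb_dU n z \<le> (b - a) * ((real (Suc n))^2 * cheb_U n b / 2)"
    using assms by (intro mult_left_mono) auto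
  with z show ?thesis by simp
qed

lemma cheb_T_mean_value:
  assumes "t \<le> d"
  obtains \<xi> where "t \<le> \<xi>" "\<xi> \<le> d"
    "cheb_T (Suc n) d - cheb_T (Suc n) t = (d - t) * (real (Suc n) * cheb_U n \<xi>)"
proof (cases "t = d")
  case False
  with assms have "t < d" by simp
  then obtain \<xi> where "t < \<xi>" "\<xi> < d"
    "cheb_T (Suc n) d - cheb_T (Suc n) t = (d - t) * (real (Suc n) * cheb_U n \<xi>)"
    using MVT2[OF _ has_real_derivative_cheb_T[of n]] by blast
  then show ?thesis by (intro that[of \<xi>]) auto
qed (use that in simp)

lemma cheb_T_diff_le:
  assumes "-1 \<le> t" "t \<le> d" "1 \<le> d"
  shows "cheb_T (Suc n) d - cheb_T (Suc n) t \<le> (d - t) * (real (Suc n) * cheb_U n d)"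
proof -
  obtain \<xi> where \<xi>: "t \<le> \<xi>" "\<xi> \<le> d"
    "cheb_T (Suc n) d - cheb_T (Suc n) t = (d - t) * (real (Suc n) * cheb_U n \<xi>)"
    using cheb_T_mean_value assms(2) by blast
  have "cheb_U n \<xi> \<le> cheb_U n d"
    using cheb_U_abs_le_cheb_U[of \<xi> d n] \<xi> assms by simp
  with \<xi> show ?thesis by (simp add: mult_left_mono)
qed

lemma cheb_T_diff_ge:
  assumes "1 \<le> t" "t \<le> d"
  shows "(d - t) * (real (Suc n))^2 \<le> cheb_T (Suc n) d - cheb_T (Suc n) t"
proof -
  obtain \<xi> where \<xi>: "t \<le> \<xi>" "\<xi> \<le> d"
    "cheb_T (Suc n) d - cheb_T (Suc n) t = (d - t) * (real (Suc n) * cheb_U n \<xi>)"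
    using cheb_T_mean_value assms(2) by blast
  have "real (Suc n) \<le> cheb_U n \<xi>"
    using cheb_U_mono[of 1 \<xi> n] cheb_U_at_one[of n] \<xi> assms by simp
  with \<xi> show ?thesis by (simp add: power2_eq_square mult_left_mono)
qed

lemma cheb_T_linearization_error_le:
  assumes "1 \<le> t" "t \<le> d"
  shows "(d - t) * (real (Suc n) * cheb_U n d) - (cheb_T (Suc n) d - cheb_T (Suc n) t)
    \<le> (d - t)^2 * (real (Suc n))^2 * (real (Suc n) * cheb_U n d) / 2"
proof -
  obtain \<xi> where \<xi>: "t \<le> \<xi>" "\<xi> \<le> d"
    "cheb_T (Suc n) d - cheb_T (Suc n) t = (d - t) * (real (Suc n) * cheb_U n \<xi>)"
    using cheb_T_mean_value assms(2) by blast
  have "cheb_U n d - cheb_U n \<xi> \<le> (d - \<xi>) * ((real (Suc n))^2 * cheb_U n d / 2)"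
    using cheb_U_diff_le \<xi> assms by simp
  also have "\<dots> \<le> (d - t) * ((real (Suc n))^2 * cheb_U n d / 2)"
    using cheb_U_ge_one[of d n] \<xi> assms by (intro mult_right_mono) auto
  finally have "(d - t) * real (Suc n) * (cheb_U n d - cheb_U n \<xi>)
      \<le> (d - t) * real (Suc n) * ((d - t) * ((real (Suc n))^2 * cheb_U n d / 2))"
    using assms by (intro mult_left_mono) auto
  with \<xi> show ?thesis by (simp add: power2_eq_square algebra_simps)
qed

lemma cheb_T_at_delta_bounds:
  assumes "0 < \<nu>" "\<nu> \<le> 1/2" and d: "d = 1 + \<nu> / (real (Suc n))^2"
  shows "1 + \<nu> \<le> cheb_T (Suc n) d" and "cheb_T (Suc n) d \<le> 5/3"
proof -
  let ?p = "real (Suc n)"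
  have d1: "1 \<le> d" and scale: "(d - 1) * ?p^2 = \<nu>"
    using assms by auto
  show "1 + \<nu> \<le> cheb_T (Suc n) d"
    using cheb_T_diff_ge[of 1 d n] cheb_T_at_one scale d1 by simp
  have "cheb_U n d - ?p \<le> (d - 1) * (?p^2 * cheb_U n d / 2)"
    using cheb_U_diff_le[of 1 d n] cheb_U_at_one[of n] d1 by simp
  also have "\<dots> = \<nu> * cheb_U n d / 2"
    by (simp add: scale[symmetric] algebra_simps)
  also have "\<dots> \<le> cheb_U n d / 4"
    using assms cheb_U_ge_one[of d n] d1 by (simp add: divide_right_mono mult_right_mono)
  finally have U: "cheb_U n d \<le> 4/3 * ?p" by simp
  have "cheb_T (Suc n) d - 1 \<le> (d - 1) * (?p * cheb_U n d)"
    using cheb_T_diff_le[of 1 d n] cheb_T_at_one d1 by simp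
  also have "\<dots> \<le> (d - 1) * (?p * (4/3 * ?p))"
    using U d1 by (intro mult_left_mono) auto
  also have "\<dots> = 4/3 * \<nu>"
    using scale by (simp add: power2_eq_square algebra_simps)
  finally show "cheb_T (Suc n) d \<le> 5/3" using assms by linarith
qed

lemma abs_gap_ratio_le_half_quotient:
  fixes A f g :: real
  assumes "0 \<le> A" "0 < f" "f \<le> g"
  shows "\<bar>A * (g - f) / (2 * f * g)\<bar> \<le> A / (2 * f)"
proof -
  have eq: "A * (g - f) / (2 * f * g) = A / (2 * f) * ((g - f) / g)"
    by simp
  have "0 \<le> (g - f) / g" "(g - f) / g \<le> 1" "0 \<le> A / (2 * f)"
    using assms by auto
  then show ?thesis
    unfolding eq using abs_of_nonneg[of "A / (2 * f) * ((g - f) / g)"] mult_left_le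
    by (metis mult_nonneg_nonneg)
qed

lemma abs_gap_ratio_le_quarter:
  fixes A f g s q :: real
  assumes "0 \<le> A" "0 < s" "0 < q" "s * q \<le> f" "f \<le> g" "g - f \<le> s * q * g / 2"
  shows "\<bar>A * (g - f) / (2 * f * g)\<bar> \<le> A / 4"
proof -
  have "0 < s * q" using assms by simp
  with assms have f: "0 < f" by linarith
  have "s * q * g \<le> f * g"
    using assms f by (intro mult_right_mono) auto
  with assms have "g - f \<le> f * g / 2" by linarith
  then have "A * (g - f) \<le> A * (f * g / 2)"
    using assms(1) by (rule mult_left_mono)
  then have "A * (g - f) \<le> A / 4 * (2 * f * g)" by simp
  moreover have "0 \<le> A * (g - f)" "0 < 2 * f * g"
    using assms f by auto
  ultimately show ?thesis
    by (simp add: pos_divide_le_eq)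
qed

lemma cheb_T_delta_gap_ratio_le:
  fixes \<nu> s :: real
  assumes "0 < \<nu>" "\<nu> \<le> 1/2" and d: "d = 1 + \<nu> / (real (Suc n))^2"
    and "0 < s" "-1 \<le> d - s"
  defines "A \<equiv> cheb_T (Suc n) d"
    and "f \<equiv> cheb_T (Suc n) d - cheb_T (Suc n) (d - s)"
    and "g \<equiv> s * (real (Suc n) * cheb_U n d)"
  shows "\<bar>A * (g - f) / (2 * f * g)\<bar> \<le> (\<nu> + 1) / (2 * \<nu>)"
proof -
  have A: "1 + \<nu> \<le> A" "A \<le> 5/3"
    unfolding A_def using cheb_T_at_delta_bounds[OF assms(1,2) d] by auto
  have d1: "1 \<le> d" using assms by simp
  have fg: "f \<le> g"
    unfolding f_def g_def using cheb_T_diff_le[of "d - s" d n] assms d1 by simp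
  have "3/2 \<le> (\<nu> + 1) / (2 * \<nu>)"
    using assms by (simp add: field_simps)
  consider "d - s < 1" | "1 \<le> d - s" by linarith
  then show ?thesis
  proof cases
    case 1
    with assms(5) have "\<bar>d - s\<bar> \<le> 1" by linarith
    then have "A - 1 \<le> f"
      unfolding f_def A_def using cheb_T_abs_le_one[of "d - s" "Suc n"] by simp
    moreover have "0 < A - 1" using A assms(1) by linarith
    ultimately have "\<bar>A * (g - f) / (2 * f * g)\<bar> \<le> A / (2 * f)"
      using abs_gap_ratio_le_half_quotient[of A f g] fg by simp
    also have "\<dots> \<le> A / (2 * (A - 1))"
      using \<open>A - 1 \<le> f\<close> \<open>0 < A - 1\<close> by (intro divide_left_mono) auto
    also have "\<dots> \<le> (\<nu> + 1) / (2 * \<nu>)"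
      using A assms(1) by (simp add: field_simps)
    finally show ?thesis .
  next
    case 2
    let ?q = "(real (Suc n))^2"
    have "s * ?q \<le> f"
      unfolding f_def using cheb_T_diff_ge[of "d - s" d n] 2 assms by (simp add: mult.commute)
    moreover have "g - f \<le> s * ?q * g / 2"
      unfolding f_def g_def using cheb_T_linearization_error_le[of "d - s" d n] 2 assms
      by (simp add: power2_eq_square algebra_simps)
    ultimately have "\<bar>A * (g - f) / (2 * f * g)\<bar> \<le> A / 4"
      using abs_gap_ratio_le_quarter[of A s ?q f g] A fg assms by simp
    with A \<open>3/2 \<le> _\<close> show ?thesis by linarith
  qed
qed

lemma omega_pn_Suc_eq:
  "omega_pn (Suc n) \<nu>
    = 2 * (real (Suc n) * cheb_U n (delta_pn (Suc n) \<nu>)) / cheb_T (Suc n) (delta_pn (Suc n) \<nu>)"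
  unfolding omega_pn_def by (simp only: DERIV_imp_deriv[OF has_real_derivative_cheb_T])

lemma P_pn_gap_ratio_eq:
  fixes n :: nat and \<nu> s :: real
  defines "d \<equiv> delta_pn (Suc n) \<nu>"
  defines "A \<equiv> cheb_T (Suc n) d"
    and "f \<equiv> cheb_T (Suc n) d - cheb_T (Suc n) (d - s)"
    and "g \<equiv> s * (real (Suc n) * cheb_U n d)"
    and "y \<equiv> omega_pn (Suc n) \<nu> * s"
  assumes "0 < A" "0 < g"
  shows "(1 - P_pn (Suc n) \<nu> y / y) / P_pn (Suc n) \<nu> y = A * (g - f) / (2 * f * g)"
proof -
  have "omega_pn (Suc n) \<nu> \<noteq> 0"
    using assms(6,7) unfolding g_def omega_pn_Suc_eq A_def d_def by auto
  then have "y / omega_pn (Suc n) \<nu> = s"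
    unfolding y_def by simp
  then have P: "P_pn (Suc n) \<nu> y = 2 * f / A"
    using assms(6) unfolding P_pn_def d_def[symmetric] f_def A_def by (simp add: field_simps)
  have "y = 2 * g / A"
    unfolding y_def g_def omega_pn_Suc_eq A_def d_def by simp
  then have "(1 - P_pn (Suc n) \<nu> y / y) / P_pn (Suc n) \<nu> y
      = (1 - (2 * f / A) / (2 * g / A)) / (2 * f / A)"
    unfolding P by simp
  also have "\<dots> = A * (g - f) / (2 * f * g)"
    using assms(6,7) by (cases "f = 0") (simp_all add: field_simps)
  finally show ?thesis .
qed

theorem lemmaA5:
  fixes p :: nat and \<nu> :: real
  assumes "p \<ge> 1" and "0 < \<nu>" and "\<nu> \<le> 1/2"
  shows "\<forall>y. 0 < y \<and> y < (2 + \<nu> / (real p)^2) * omega_pn p \<nu> \<longrightarrow>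
            \<bar>(1 - P_pn p \<nu> y / y) / P_pn p \<nu> y\<bar> \<le> (\<nu> + 1) / (2 * \<nu>)"
proof (intro allI impI)
  fix y assume y: "0 < y \<and> y < (2 + \<nu> / (real p)^2) * omega_pn p \<nu>"
  obtain n where p: "p = Suc n" using assms(1) by (cases p) auto
  define d where "d = delta_pn p \<nu>"
  have d: "d = 1 + \<nu> / (real (Suc n))^2" unfolding d_def delta_pn_def p ..
  have A_pos: "0 < cheb_T (Suc n) d"
    using cheb_T_at_delta_bounds(1)[OF assms(2,3) d] assms(2) by linarith
  have B_pos: "0 < real (Suc n) * cheb_U n d"
    using cheb_U_ge_one[of d n] d assms(2) by simp
  have "0 < omega_pn p \<nu>"
    unfolding p omega_pn_Suc_eq using A_pos B_pos by (simp add: d_def p)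
  define s where "s = y / omega_pn p \<nu>"
  have "0 < s" "s < 2 + \<nu> / (real p)^2"
    using y \<open>0 < omega_pn p \<nu>\<close> unfolding s_def by (auto simp: divide_less_eq)
  then have "-1 \<le> d - s" using d p by simp
  have "y = omega_pn p \<nu> * s"
    unfolding s_def using \<open>0 < omega_pn p \<nu>\<close> by simp
  then show "\<bar>(1 - P_pn p \<nu> y / y) / P_pn p \<nu> y\<bar> \<le> (\<nu> + 1) / (2 * \<nu>)"
    using P_pn_gap_ratio_eq[of n \<nu> s] A_pos B_pos \<open>0 < s\<close>
      cheb_T_delta_gap_ratio_le[OF assms(2,3) d \<open>0 < s\<close> \<open>-1 \<le> d - s\<close>]
    unfolding p d_def by simp
qed

end
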